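(* Let $(\mathfrak g,[-,-])$ be a Lie algebra, $(\rho,V)$ a representation, and $T:V\to\mathfrak g$ an admissible anti-$\mathcal O$-operator of $(\mathfrak g,[-,-])$ associated to $(\rho,V)$. Then $T$ is strong. Moreover, $(V,\circ)$ with $u\circ v=-\rho(T(u))v$ is an admissible Novikov algebra.
   Context: All vector spaces are finite-dimensional over a field $\mathbb F$ of characteristic $0$. A linear map $T:V\to\mathfrak g$ is an anti-$\mathcal O$-operator associated to $(\rho,V)$ if $[T(u),T(v)]=T(\rho(T(v))u-\rho(T(u))v)$ for all $u,v\in V$; it is strong if $\rho([T(u),T(v)])w+\rho([T(v),T(w)])u+\rho([T(w),T(u)])v=0$ for all $u,v,w$; it is admissible if $2\rho(T(u))\rho(T(v))w-2\rho(T(u))\rho(T(w))v=\rho(T(\rho(T(u))v))w-\rho(T(\rho(T(u))w))v$ for all $u,v,w\in V$. For a bilinear operation $\circ$ write $[x,y]=x\circ y-y\circ x$; an admissible Novikov algebra is $(A,\circ)$ with $x\circ(y\circ z)-y\circ(x\circ z)=[y,x]\circ z$ and $2x\circ[y,z]=(x\circ y)\circ z-(x\circ z)\circ y$ for all $x,y,z$. *)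

theory Defs
  imports Main "HOL.Vector_Spaces"
begin

definition fd_vector_space :: "('k::field \<Rightarrow> 'v::ab_group_add \<Rightarrow> 'v) \<Rightarrow> bool" where
  "fd_vector_space sc \<longleftrightarrow> vector_space sc \<and> (\<exists>B. finite B \<and> module.span sc B = UNIV)"

definition bilinear_op :: "('k::field \<Rightarrow> 'v::ab_group_add \<Rightarrow> 'v) \<Rightarrow> ('v \<Rightarrow> 'v \<Rightarrow> 'v) \<Rightarrow> bool" where
  "bilinear_op sc m \<longleftrightarrow> (\<forall>x. Vector_Spaces.linear sc sc (m x)) \<and> (\<forall>y. Vector_Spaces.linear sc sc (\<lambda>x. m x y))"

definition lie_algebra :: "('k::field \<Rightarrow> 'g::ab_group_add \<Rightarrow> 'g) \<Rightarrow> ('g \<Rightarrow> 'g \<Rightarrow> 'g) \<Rightarrow> bool" where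
  "lie_algebra sg br \<longleftrightarrow> fd_vector_space sg \<and> bilinear_op sg br
     \<and> (\<forall>x. br x x = 0)
     \<and> (\<forall>x y z. br x (br y z) + br y (br z x) + br z (br x y) = 0)"

definition lie_representation ::
  "('k::field \<Rightarrow> 'g::ab_group_add \<Rightarrow> 'g) \<Rightarrow> ('g \<Rightarrow> 'g \<Rightarrow> 'g) \<Rightarrow>
   ('k \<Rightarrow> 'v::ab_group_add \<Rightarrow> 'v) \<Rightarrow> ('g \<Rightarrow> 'v \<Rightarrow> 'v) \<Rightarrow> bool" where
  "lie_representation sg br sv rho \<longleftrightarrow> fd_vector_space sv
     \<and> (\<forall>x. Vector_Spaces.linear sv sv (rho x))
     \<and> (\<forall>x y v. rho (x + y) v = rho x v + rho y v)
     \<and> (\<forall>c x v. rho (sg c x) v = sv c (rho x v))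
     \<and> (\<forall>x y v. rho (br x y) v = rho x (rho y v) - rho y (rho x v))"

definition anti_O_operator ::
  "('k::field \<Rightarrow> 'g::ab_group_add \<Rightarrow> 'g) \<Rightarrow> ('g \<Rightarrow> 'g \<Rightarrow> 'g) \<Rightarrow>
   ('k \<Rightarrow> 'v::ab_group_add \<Rightarrow> 'v) \<Rightarrow> ('g \<Rightarrow> 'v \<Rightarrow> 'v) \<Rightarrow> ('v \<Rightarrow> 'g) \<Rightarrow> bool" where
  "anti_O_operator sg br sv rho T \<longleftrightarrow> Vector_Spaces.linear sv sg T
     \<and> (\<forall>u v. br (T u) (T v) = T (rho (T v) u - rho (T u) v))"

definition strong_op :: "('g \<Rightarrow> 'g \<Rightarrow> 'g) \<Rightarrow> ('g \<Rightarrow> 'v::ab_group_add \<Rightarrow> 'v) \<Rightarrow> ('v \<Rightarrow> 'g) \<Rightarrow> bool" where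
  "strong_op br rho T \<longleftrightarrow> (\<forall>u v w.
     rho (br (T u) (T v)) w + rho (br (T v) (T w)) u + rho (br (T w) (T u)) v = 0)"

(* 2a is written a + a *)
definition admissible_op :: "('g \<Rightarrow> 'v::ab_group_add \<Rightarrow> 'v) \<Rightarrow> ('v \<Rightarrow> 'g) \<Rightarrow> bool" where
  "admissible_op rho T \<longleftrightarrow> (\<forall>u v w.
     (rho (T u) (rho (T v) w) + rho (T u) (rho (T v) w))
       - (rho (T u) (rho (T w) v) + rho (T u) (rho (T w) v))
     = rho (T (rho (T u) v)) w - rho (T (rho (T u) w)) v)"

definition commutator_of :: "('a::ab_group_add \<Rightarrow> 'a \<Rightarrow> 'a) \<Rightarrow> 'a \<Rightarrow> 'a \<Rightarrow> 'a" where
  "commutator_of m x y = m x y - m y x"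

definition admissible_novikov :: "('k::field \<Rightarrow> 'a::ab_group_add \<Rightarrow> 'a) \<Rightarrow> ('a \<Rightarrow> 'a \<Rightarrow> 'a) \<Rightarrow> bool" where
  "admissible_novikov sc m \<longleftrightarrow> bilinear_op sc m
     \<and> (\<forall>x y z. m x (m y z) - m y (m x z) = m (commutator_of m y x) z)
     \<and> (\<forall>x y z. m x (commutator_of m y z) + m x (commutator_of m y z)
                 = m (m x y) z - m (m x z) y)"

end

theory Submission
  imports Defs
begin

(* Write u \<circ> v = - \<rho>(T u) v. Because \<rho> is a representation, the anti-O-operator identity
   says precisely that \<circ> satisfies the first Novikov identity, and admissibility of T is precisely
   the second one. Strongness of T says that the cyclic sum S of u \<circ> (v \<circ> w) - v \<circ> (u \<circ> w)
   vanishes, which holds in every admissible Novikov algebra: summing the first identity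
   cyclically expresses S through the products (x \<circ> y) \<circ> z, summing the second one cyclically
   gives 2S = -S for the same expression, so 3S = 0 and S = 0 in characteristic 0. *)

lemma vector_space_triple_eq_0_imp:
  fixes scale :: "'k::field_char_0 \<Rightarrow> 'v::ab_group_add \<Rightarrow> 'v"
    and x :: 'v
  assumes "vector_space scale" and "x + x + x = 0"
  shows "x = 0"
proof -
  interpret vector_space scale by fact
  have "scale 3 x = scale (1 + 1 + 1) x" by simp
  also have "\<dots> = x + x + x" by (simp only: scale_left_distrib scale_one)
  finally show ?thesis using assms(2) by simp
qed

lemma bilinear_op_vector_space:
  assumes "bilinear_op sc m"
  shows "vector_space sc"
  using assms unfolding bilinear_op_def linear_iff by blast

lemma admissible_novikov_cyclic_sum_eq_0:
  fixes sc :: "'k::field_char_0 \<Rightarrow> 'a::ab_group_add \<Rightarrow> 'a"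
  assumes "admissible_novikov sc m"
  shows "(m x (m y z) - m y (m x z)) + (m y (m z x) - m z (m y x))
           + (m z (m x y) - m x (m z y)) = 0" (is "?S = 0")
proof -
  have bil: "bilinear_op sc m"
    and left_comm: "\<And>x y z. m x (m y z) - m y (m x z) = m (m y x - m x y) z"
    and adm: "\<And>x y z. m x (m y z - m z y) + m x (m y z - m z y) = m (m x y) z - m (m x z) y"
    using assms unfolding admissible_novikov_def commutator_of_def by blast+
  have diff_left: "m (a - b) c = m a c - m b c" for a b c
    using bil module_hom.diff[of sc sc "\<lambda>x. m x c"]
    unfolding bilinear_op_def linear_iff_module_hom by blast
  have diff_right: "m a (b - c) = m a b - m a c" for a b c
    using bil module_hom.diff[of sc sc "m a"]
    unfolding bilinear_op_def linear_iff_module_hom by blast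
  have S: "?S = (m (m y x) z - m (m x y) z) + (m (m z y) x - m (m y z) x)
                  + (m (m x z) y - m (m z x) y)"
    by (simp only: left_comm diff_left)
  have "?S + ?S = (m x (m y z - m z y) + m x (m y z - m z y))
                    + (m y (m z x - m x z) + m y (m z x - m x z))
                    + (m z (m x y - m y x) + m z (m x y - m y x))"
    by (simp add: diff_right algebra_simps)
  also have "\<dots> = (m (m x y) z - m (m x z) y) + (m (m y z) x - m (m y x) z)
                    + (m (m z x) y - m (m z y) x)"
    by (simp only: adm)
  finally have twice: "?S + ?S = \<dots>" .
  have "?S + ?S + ?S = 0"
    unfolding twice by (subst S) (simp add: algebra_simps)
  then show ?thesis
    using vector_space_triple_eq_0_imp bilinear_op_vector_space[OF bil] by blast
qed

locale lie_representation_on =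
  fixes sg :: "'k::field \<Rightarrow> 'g::ab_group_add \<Rightarrow> 'g"
    and br :: "'g \<Rightarrow> 'g \<Rightarrow> 'g"
    and sv :: "'k \<Rightarrow> 'v::ab_group_add \<Rightarrow> 'v"
    and rho :: "'g \<Rightarrow> 'v \<Rightarrow> 'v"
  assumes representation: "lie_representation sg br sv rho"
begin

lemma module_hom_rho: "module_hom sv sv (rho x)"
  using representation unfolding lie_representation_def module_hom_iff_linear by blast

lemma vector_space_sv: "vector_space sv"
  using representation unfolding lie_representation_def fd_vector_space_def by blast

lemma additive_rho_left: "additive (\<lambda>x. rho x v)"
  using representation unfolding lie_representation_def by unfold_locales blast

lemma rho_scale_left: "rho (sg c x) v = sv c (rho x v)"
  using representation unfolding lie_representation_def by blast

lemma rho_bracket: "rho (br x y) v = rho x (rho y v) - rho y (rho x v)"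
  using representation unfolding lie_representation_def by blast

lemmas rho_simps = module_hom.add[OF module_hom_rho] module_hom.diff[OF module_hom_rho]
  module_hom.neg[OF module_hom_rho] module_hom.scale[OF module_hom_rho]
  additive.add[OF additive_rho_left] additive.diff[OF additive_rho_left]
  additive.minus[OF additive_rho_left] rho_scale_left

end

lemma strong_op_if_admissible_novikov:
  fixes sv :: "'k::field_char_0 \<Rightarrow> 'v::ab_group_add \<Rightarrow> 'v"
  assumes "lie_representation sg br sv rho"
    and "admissible_novikov sv (\<lambda>u v. - rho (T u) v)"
  shows "strong_op br rho T"
proof -
  interpret lie_representation_on sg br sv rho
    using assms(1) by unfold_locales
  show ?thesis
    unfolding strong_op_def
    using admissible_novikov_cyclic_sum_eq_0[OF assms(2)]
    by (simp add: rho_bracket rho_simps)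
qed

locale anti_O_operator_on = lie_representation_on +
  fixes T
  assumes anti_O: "anti_O_operator sg br sv rho T"
begin

lemma module_hom_T: "module_hom sv sg T"
  using anti_O unfolding anti_O_operator_def module_hom_iff_linear by blast

lemma T_bracket: "br (T u) (T v) = T (rho (T v) u - rho (T u) v)"
  using anti_O unfolding anti_O_operator_def by blast

lemmas T_simps = module_hom.add[OF module_hom_T] module_hom.diff[OF module_hom_T]
  module_hom.neg[OF module_hom_T] module_hom.scale[OF module_hom_T]

lemma rho_T_commutator:
  "rho (T u) (rho (T v) w) - rho (T v) (rho (T u) w) = rho (T (rho (T v) u - rho (T u) v)) w"
  by (simp only: rho_bracket[symmetric] T_bracket)

lemma bilinear_novikov_product: "bilinear_op sv (\<lambda>u v. - rho (T u) v)"
proof -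
  interpret vector_space sv by (rule vector_space_sv)
  show ?thesis
    unfolding bilinear_op_def linear_iff
    by (simp add: vector_space_sv rho_simps T_simps scale_minus_right)
qed

lemma admissible_novikov_iff_admissible:
  "admissible_novikov sv (\<lambda>u v. - rho (T u) v) \<longleftrightarrow> admissible_op rho T"
  unfolding admissible_novikov_def admissible_op_def commutator_of_def
  by (simp add: bilinear_novikov_product rho_T_commutator rho_simps T_simps algebra_simps)

end

theorem proposition3p15:
  fixes sg :: "'k::field_char_0 \<Rightarrow> 'g::ab_group_add \<Rightarrow> 'g"
    and br :: "'g \<Rightarrow> 'g \<Rightarrow> 'g"
    and sv :: "'k \<Rightarrow> 'v::ab_group_add \<Rightarrow> 'v"
    and rho :: "'g \<Rightarrow> 'v \<Rightarrow> 'v"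
    and T :: "'v \<Rightarrow> 'g"
  assumes "lie_algebra sg br"
    and "lie_representation sg br sv rho"
    and "anti_O_operator sg br sv rho T"
    and "admissible_op rho T"
  shows "strong_op br rho T \<and> admissible_novikov sv (\<lambda>u v. - rho (T u) v)"
proof -
  interpret anti_O_operator_on sg br sv rho T
    using assms(2,3) by unfold_locales
  have "admissible_novikov sv (\<lambda>u v. - rho (T u) v)"
    using assms(4) admissible_novikov_iff_admissible by blast
  with assms(2) show ?thesis
    using strong_op_if_admissible_novikov by blast
qed

end
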